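(* Let $R$ be a division ring and let $\{p_n(x)\}_{n\ge0}\subseteq R[x]$ and $\{q_n(y)\}_{n\ge0}\subseteq R[y]$ be polynomials with $\deg p_n=\deg q_n=n$ for all $n$. For any sequence $\{c_k\}_{k\in\mathbb{Z}_{\ge0}}$ in $R$ there exists a unique family of bimoments $\{I_{a,b}\}_{a,b\in\mathbb{Z}_{\ge0}}\subseteq R$ such that, for the associated pairing, $\langle p_n,q_m\rangle=0$ for all $n\neq m$ and $\langle p_k,q_k\rangle=c_k$ for all $k$.
   Context: Elements of $R[x]$ are written $\sum_i a_i x^i$ and elements of $R[y]$ as $\sum_j y^j b_j$ with coefficients in $R$. A family $\{I_{a,b}\}$ of elements of $R$ (bimoments) determines the pairing $\langle\cdot,\cdot\rangle:R[x]\times R[y]\to R$, $\langle \sum_i a_i x^i,\sum_j y^j b_j\rangle=\sum_{i,j}a_iI_{i,j}b_j$. *)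

theory Defs
  imports "HOL-Computational_Algebra.Polynomial"
begin

text \<open>Bilinear pairing determined by bimoments I:
  for p = sum_i a_i x^i and q = sum_j y^j b_j,
  pairing I p q = sum_{i,j} a_i * I i j * b_j (coefficients of p on the left,
  coefficients of q on the right; R may be noncommutative).\<close>
definition bimoment_pairing ::
  "(nat \<Rightarrow> nat \<Rightarrow> 'a::ring) \<Rightarrow> 'a poly \<Rightarrow> 'a poly \<Rightarrow> 'a" where
  "bimoment_pairing I p q =
     (\<Sum>i\<le>degree p. \<Sum>j\<le>degree q. coeff p i * I i j * coeff q j)"

end

theory Submission
  imports Defs
begin

text \<open>Split off the leading term, \<open>\<langle>p, q\<rangle> = lead_coeff p * I (deg p) (deg q) * lead_coeff q + (lower terms)\<close>,
  where the lower terms only involve bimoments \<open>I i j\<close> with \<open>i + j < deg p + deg q\<close>.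
  Since \<open>deg p\<^sub>n = n\<close> and \<open>deg q\<^sub>m = m\<close>, the conditions form a triangular system in \<open>I n m\<close>
  ordered by \<open>n + m\<close>, with invertible diagonal coefficients; it is solved uniquely by
  well-founded recursion on \<open>n + m\<close>.\<close>

lemma wf_fixpoint_ex1:
  fixes F :: "('a \<Rightarrow> 'b) \<Rightarrow> 'a \<Rightarrow> 'b"
  assumes "wf R"
    and adm: "\<And>f g x. (\<And>z. (z, x) \<in> R \<Longrightarrow> f z = g z) \<Longrightarrow> F f x = F g x"
  shows "\<exists>!f. \<forall>x. f x = F f x"
proof -
  have "adm_wf R F"
    unfolding adm_wf_def
  proof (intro allI impI)
    fix f g :: "'a \<Rightarrow> 'b" and x
    assume "\<forall>z. (z, x) \<in> R \<longrightarrow> f z = g z"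
    then show "F f x = F g x"
      by - (rule adm, blast)
  qed
  with \<open>wf R\<close> have fixpoint: "wfrec R F = F (wfrec R F)"
    by (rule wfrec_fixpoint)
  show ?thesis
  proof (rule ex1I)
    show "\<forall>x. wfrec R F x = F (wfrec R F) x"
      using fixpoint by (blast intro: fun_cong)
  next
    fix f
    assume f: "\<forall>x. f x = F f x"
    show "f = wfrec R F"
    proof
      fix x
      show "f x = wfrec R F x"
        using \<open>wf R\<close>
      proof (induction x rule: wf_induct_rule)
        case (less x)
        have "f x = F f x"
          using f by (rule spec)
        also have "\<dots> = F (wfrec R F) x"
          using less by (rule adm)
        also have "\<dots> = wfrec R F x"
          using fixpoint by (rule fun_cong[symmetric])
        finally show ?case .
      qed
    qed
  qed
qed

lemma triangular_recursion_ex1: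
  fixes F :: "(nat \<Rightarrow> nat \<Rightarrow> 'b) \<Rightarrow> nat \<Rightarrow> nat \<Rightarrow> 'b"
  assumes "\<And>X Y n m. (\<And>i j. i + j < n + m \<Longrightarrow> X i j = Y i j) \<Longrightarrow> F X n m = F Y n m"
  shows "\<exists>!X. \<forall>n m. X n m = F X n m"
proof -
  let ?P = "\<lambda>X. \<forall>n m. X n m = F X n m"
  have "\<exists>!f. \<forall>x. f x = (case x of (n, m) \<Rightarrow> F (curry f) n m)"
  proof (rule wf_fixpoint_ex1[of "measure (\<lambda>(i, j). i + j)"])
    fix f g :: "nat \<times> nat \<Rightarrow> 'b" and x :: "nat \<times> nat"
    assume agree: "\<And>z. (z, x) \<in> measure (\<lambda>(i, j). i + j) \<Longrightarrow> f z = g z"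
    obtain n m where x: "x = (n, m)"
      by fastforce
    have "F (curry f) n m = F (curry g) n m"
    proof (rule assms)
      fix i j
      assume "i + j < n + m"
      then show "curry f i j = curry g i j"
        using agree[of "(i, j)"] x by simp
    qed
    with x show "(case x of (n, m) \<Rightarrow> F (curry f) n m) = (case x of (n, m) \<Rightarrow> F (curry g) n m)"
      by simp
  qed simp
  then obtain f where fixpoint: "\<forall>x. f x = (case x of (n, m) \<Rightarrow> F (curry f) n m)"
    and unique_fixpoint: "\<And>g. \<forall>x. g x = (case x of (n, m) \<Rightarrow> F (curry g) n m) \<Longrightarrow> g = f"
    by (elim ex1E) blast
  have f: "?P (curry f)"
    using fixpoint by simp
  have unique: "g = f" if "?P (curry g)" for g
    using that by (intro unique_fixpoint) auto
  show ?thesis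
  proof (rule ex1I[of _ "curry f"])
    fix X
    assume "?P X"
    then have "case_prod X = f"
      by (intro unique) simp
    then show "X = curry f"
      by (metis curry_case_prod)
  qed (rule f)
qed

definition pairing_below :: "(nat \<Rightarrow> nat \<Rightarrow> 'a::ring) \<Rightarrow> 'a poly \<Rightarrow> 'a poly \<Rightarrow> 'a" where
  "pairing_below I p q =
     (\<Sum>i\<le>degree p. \<Sum>j\<le>degree q.
        if i = degree p \<and> j = degree q then 0 else coeff p i * I i j * coeff q j)"

lemma bimoment_pairing_split_lead:
  "bimoment_pairing I p q =
     lead_coeff p * I (degree p) (degree q) * lead_coeff q + pairing_below I p q"
proof -
  let ?t = "\<lambda>i j. coeff p i * I i j * coeff q j"
  let ?top = "\<lambda>i j. i = degree p \<and> j = degree q"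
  have "bimoment_pairing I p q =
        (\<Sum>i\<le>degree p. \<Sum>j\<le>degree q. (if ?top i j then ?t i j else 0) + (if ?top i j then 0 else ?t i j))"
    unfolding bimoment_pairing_def by (intro sum.cong refl) simp
  also have "\<dots> = (\<Sum>i\<le>degree p. \<Sum>j\<le>degree q. if ?top i j then ?t i j else 0) + pairing_below I p q"
    unfolding pairing_below_def by (simp only: sum.distrib)
  also have "(\<Sum>i\<le>degree p. \<Sum>j\<le>degree q. if ?top i j then ?t i j else 0) =
             (\<Sum>i\<le>degree p. if i = degree p then ?t i (degree q) else 0)"
    by (intro sum.cong refl) (simp add: sum.delta)
  finally show ?thesis by (simp add: sum.delta)
qed

lemma pairing_below_cong:
  assumes "\<And>i j. i + j < degree p + degree q \<Longrightarrow> I i j = J i j"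
  shows "pairing_below I p q = pairing_below J p q"
  unfolding pairing_below_def
  by (intro sum.cong refl) (auto simp: assms)

lemma sandwich_add_eq_iff:
  fixes a b x r t :: "'a::division_ring"
  assumes "a \<noteq> 0" "b \<noteq> 0"
  shows "a * x * b + r = t \<longleftrightarrow> x = inverse a * (t - r) * inverse b"
proof -
  have "a * x * b = s \<longleftrightarrow> x = inverse a * s * inverse b" for s
  proof
    assume "a * x * b = s"
    moreover have "inverse a * (a * x * b) * inverse b = (inverse a * a) * x * (b * inverse b)"
      by (simp only: mult.assoc)
    ultimately show "x = inverse a * s * inverse b"
      using assms by simp
  next
    assume "x = inverse a * s * inverse b"
    moreover have "a * (inverse a * s * inverse b) * b = (a * inverse a) * s * (inverse b * b)"
      by (simp only: mult.assoc)
    ultimately show "a * x * b = s"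
      using assms by simp
  qed
  then show ?thesis
    by (metis eq_diff_eq)
qed

theorem mainTheorem4:
  fixes p q :: "nat \<Rightarrow> 'a::division_ring poly"
    and c :: "nat \<Rightarrow> 'a"
  assumes "\<And>n. p n \<noteq> 0 \<and> degree (p n) = n"
      and "\<And>n. q n \<noteq> 0 \<and> degree (q n) = n"
  shows "\<exists>!I :: nat \<Rightarrow> nat \<Rightarrow> 'a.
           (\<forall>n m. n \<noteq> m \<longrightarrow> bimoment_pairing I (p n) (q m) = 0) \<and>
           (\<forall>k. bimoment_pairing I (p k) (q k) = c k)"
proof -
  define T where "T n m = (if n = m then c n else 0)" for n m
  define F where "F I n m = inverse (lead_coeff (p n)) * (T n m - pairing_below I (p n) (q m))
                             * inverse (lead_coeff (q m))" for I n m
  have lead: "coeff (p n) n \<noteq> 0" "coeff (q n) n \<noteq> 0" for n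
    using assms[of n] leading_coeff_0_iff by metis+
  have diagonal_iff: "(\<forall>n m. n \<noteq> m \<longrightarrow> bimoment_pairing I (p n) (q m) = 0) \<and>
        (\<forall>k. bimoment_pairing I (p k) (q k) = c k)
        \<longleftrightarrow> (\<forall>n m. bimoment_pairing I (p n) (q m) = T n m)" for I
    by (auto simp: T_def)
  have recursion_iff: "(\<forall>n m. bimoment_pairing I (p n) (q m) = T n m)
        \<longleftrightarrow> (\<forall>n m. I n m = F I n m)" for I
    using assms by (simp add: bimoment_pairing_split_lead sandwich_add_eq_iff lead F_def)
  have "\<exists>!I. \<forall>n m. I n m = F I n m"
  proof (rule triangular_recursion_ex1)
    fix I J :: "nat \<Rightarrow> nat \<Rightarrow> 'a" and n m
    assume "\<And>i j. i + j < n + m \<Longrightarrow> I i j = J i j"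
    then have "pairing_below I (p n) (q m) = pairing_below J (p n) (q m)"
      using assms by (intro pairing_below_cong) simp
    then show "F I n m = F J n m"
      by (simp add: F_def)
  qed
  then show ?thesis
    unfolding diagonal_iff recursion_iff .
qed

end
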